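(* Let $\beta>0$, $\alpha\in(0,1)$ and $\rho>0$. Consider the planar system \[ \dot p=\rho\,(1-e^{p})-q,\qquad \dot q=-\beta\alpha\rho\,(1-e^{p}),\qquad (p,q)\in\mathbb{R}^2 . \] Then this system is globally stable, with all solutions tending to $(0,0)$ as $t\to\infty$.
   Context: This system arises from the single-agent resource–consumption model $\dot x=(1-x)x-xy$, $\dot y=\beta\alpha(x-\rho)$ via the change of variables $p=\ln x-\ln\rho$, $q=y-(1-\rho)$. *)

theory Defs
  imports "HOL-Analysis.Analysis"
begin

definition rc_field :: "real \<Rightarrow> real \<Rightarrow> real \<Rightarrow> real \<times> real \<Rightarrow> real \<times> real" where
  "rc_field \<beta> \<alpha> \<rho> z =
     (\<rho> * (1 - exp (fst z)) - snd z, - \<beta> * \<alpha> * \<rho> * (1 - exp (fst z)))"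

definition rc_solution :: "real \<Rightarrow> real \<Rightarrow> real \<Rightarrow> (real \<Rightarrow> real \<times> real) \<Rightarrow> bool" where
  "rc_solution \<beta> \<alpha> \<rho> x \<longleftrightarrow>
     (\<forall>t\<ge>0. (x has_vector_derivative rc_field \<beta> \<alpha> \<rho> (x t)) (at t within {0..}))"

end

theory Submission
  imports Defs "HOL-Real_Asymp.Real_Asymp"
begin

text \<open>The energy \<open>V = \<beta>\<alpha>\<rho> (e\<^sup>p - 1 - p) + q\<^sup>2/2\<close> satisfies
  \<open>V' = -\<beta>\<alpha>\<rho>\<^sup>2 (e\<^sup>p - 1)\<^sup>2 \<le> 0\<close> along solutions. This gives Lyapunov stability
  and confines \<open>p\<close> to a bounded range determined by the initial energy. On that range the
  perturbed function \<open>W = V + e q (e\<^sup>p - 1)\<close>, for small \<open>e > 0\<close>, is comparable to \<open>V\<close>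
  and satisfies \<open>W' \<le> -\<delta> W\<close>, so \<open>V\<close> decays exponentially and every solution tends to
  the origin. Global existence: after capping \<open>p\<close> the field is globally Lipschitz, a
  Picard iteration in an exponentially weighted sup norm solves the capped system on
  \<open>[0,\<infinity>)\<close>, and the energy bound shows that the cap is never reached.\<close>

section \<open>Global solutions of Lipschitz vector fields\<close>

lemma integral_has_vector_derivative_nonneg:
  fixes g :: "real \<Rightarrow> 'a::banach"
  assumes "continuous_on UNIV g" and "t \<ge> 0"
  shows "((\<lambda>u. integral {0..u} g) has_vector_derivative g t) (at t within {0..})"
proof -
  have "((\<lambda>u. integral {0..u} g) has_vector_derivative g t) (at t within {0..t+1})"
    by (rule integral_has_vector_derivative) (use assms in \<open>auto intro: continuous_on_subset\<close>)
  moreover have "at t within {0..t+1} = at t within {0..}"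
    by (rule at_within_nhd[of _ "{..<t+1}"]) auto
  ultimately show ?thesis by simp
qed

lemma exp_weighted_integral_le:
  fixes g :: "real \<Rightarrow> 'a::banach"
  assumes \<mu>: "\<mu> > 0" and s: "s \<ge> 0" and g: "continuous_on {0..s} g"
    and bound: "\<And>r. r \<in> {0..s} \<Longrightarrow> norm (g r) \<le> C * exp (\<mu> * r)"
  shows "exp (- \<mu> * s) * norm (integral {0..s} g) \<le> C / \<mu>"
proof -
  have "norm (g 0) \<le> C" using bound[of 0] s by simp
  then have C: "C \<ge> 0" using norm_ge_zero order_trans by blast
  have "((\<lambda>r. C * exp (\<mu> * r)) has_integral C * exp (\<mu> * s) / \<mu> - C * exp (\<mu> * 0) / \<mu>) {0..s}"
    using \<mu> s by (intro fundamental_theorem_of_calculus)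
      (auto intro!: derivative_eq_intros simp: has_real_derivative_iff_has_vector_derivative[symmetric])
  then have "integral {0..s} (\<lambda>r. C * exp (\<mu> * r)) = C * (exp (\<mu> * s) - 1) / \<mu>"
    by (subst integral_unique) (auto simp: diff_divide_distrib right_diff_distrib)
  moreover have "norm (integral {0..s} g) \<le> integral {0..s} (\<lambda>r. C * exp (\<mu> * r))"
    using g bound by (intro integral_norm_bound_integral integrable_continuous_real)
      (auto intro!: continuous_intros)
  ultimately have "norm (integral {0..s} g) \<le> C * (exp (\<mu> * s) - 1) / \<mu>"
    by simp
  then have "exp (- \<mu> * s) * norm (integral {0..s} g) \<le> exp (- \<mu> * s) * (C * (exp (\<mu> * s) - 1) / \<mu>)"
    by (rule mult_left_mono) simp
  also have "\<dots> = C * (1 - exp (- \<mu> * s)) / \<mu>"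
    by (simp add: exp_minus field_simps)
  also have "\<dots> \<le> C / \<mu>"
    using C \<mu> by (simp add: divide_right_mono mult_left_le)
  finally show ?thesis .
qed

text \<open>Fixed points \<open>y\<close> of \<open>weighted_picard F z0 \<mu>\<close> correspond to solutions
  \<open>x t = exp (\<mu> * t) *\<^sub>R y t\<close> of \<open>x' = F x\<close>, \<open>x 0 = z0\<close>; the weight makes the
  Picard operator a contraction in the sup norm on the whole half-line.\<close>

definition weighted_picard :: "('a::banach \<Rightarrow> 'a) \<Rightarrow> 'a \<Rightarrow> real \<Rightarrow> (real \<Rightarrow> 'a) \<Rightarrow> real \<Rightarrow> 'a" where
  "weighted_picard F z0 \<mu> y t =
     exp (- \<mu> * max 0 t) *\<^sub>R (z0 + integral {0..max 0 t} (\<lambda>r. F (exp (\<mu> * r) *\<^sub>R y r)))"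

lemma weighted_picard_continuous:
  assumes F: "continuous_on UNIV F" and y: "continuous_on UNIV y"
  shows "continuous_on UNIV (weighted_picard F z0 \<mu> y)"
proof -
  let ?g = "\<lambda>r. F (exp (\<mu> * r) *\<^sub>R y r)"
  have g: "continuous_on UNIV ?g"
    by (rule continuous_on_compose2[OF F]) (auto intro!: continuous_intros y)
  have "continuous_on {0..} (\<lambda>u. integral {0..u} ?g)"
    unfolding continuous_on_eq_continuous_within
    by (auto intro: has_vector_derivative_continuous integral_has_vector_derivative_nonneg[OF g])
  then have "continuous_on UNIV (\<lambda>t. integral {0..max 0 t} ?g)"
    by (rule continuous_on_compose2) (auto intro!: continuous_intros)
  then show ?thesis
    unfolding weighted_picard_def by (auto intro!: continuous_intros)
qed

lemma weighted_picard_dist_le: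
  assumes F: "L-lipschitz_on UNIV F" and \<mu>: "\<mu> > 0" "2 * L \<le> \<mu>"
    and y: "continuous_on UNIV y1" "continuous_on UNIV y2"
    and d: "\<And>r. norm (y1 r - y2 r) \<le> d"
  shows "norm (weighted_picard F z0 \<mu> y1 t - weighted_picard F z0 \<mu> y2 t) \<le> d / 2"
proof -
  define s where "s = max 0 t"
  define g where "g y r = F (exp (\<mu> * r) *\<^sub>R y r)" for y :: "real \<Rightarrow> 'a" and r
  have L: "L \<ge> 0" using F by (rule lipschitz_on_nonneg)
  have Fc: "continuous_on UNIV F" using F by (rule lipschitz_on_continuous_on)
  have gc: "continuous_on {0..s} (g y)" if "continuous_on UNIV y" for y
    unfolding g_def by (rule continuous_on_compose2[OF Fc]) (auto intro!: continuous_intros continuous_on_subset[OF that])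
  have "norm (g y1 r - g y2 r) \<le> (L * d) * exp (\<mu> * r)" for r
  proof -
    have "norm (g y1 r - g y2 r) \<le> L * norm (exp (\<mu> * r) *\<^sub>R (y1 r - y2 r))"
      unfolding g_def scaleR_diff_right by (rule lipschitz_on_normD[OF F]) auto
    also have "\<dots> \<le> L * (exp (\<mu> * r) * d)"
      using d L by (intro mult_left_mono) auto
    finally show ?thesis by (simp add: ac_simps)
  qed
  then have "exp (- \<mu> * s) * norm (integral {0..s} (\<lambda>r. g y1 r - g y2 r)) \<le> L * d / \<mu>"
    by (intro exp_weighted_integral_le \<mu> continuous_on_diff gc y) (auto simp: s_def)
  moreover have "L * d / \<mu> \<le> d / 2"
  proof -
    have "0 \<le> d" using d[of 0] norm_ge_zero order_trans by blast
    then have "2 * L * d \<le> \<mu> * d" using \<mu> by (intro mult_right_mono) auto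
    then show ?thesis using \<mu> by (simp add: field_simps)
  qed
  moreover have "norm (weighted_picard F z0 \<mu> y1 t - weighted_picard F z0 \<mu> y2 t)
      = exp (- \<mu> * s) * norm (integral {0..s} (\<lambda>r. g y1 r - g y2 r))"
    unfolding weighted_picard_def s_def[symmetric] g_def[symmetric]
    by (simp add: integral_diff integrable_continuous_real gc y scaleR_diff_right[symmetric])
  ultimately show ?thesis by linarith
qed

lemma weighted_picard_zero_le:
  assumes "\<mu> > 0"
  shows "norm (weighted_picard F z0 \<mu> (\<lambda>_. 0) t) \<le> norm z0 + norm (F 0) / \<mu>"
proof -
  define s where "s = max 0 t"
  have "exp (- \<mu> * s) * norm (integral {0..s} (\<lambda>_. F 0)) \<le> norm (F 0) / \<mu>"
    using assms by (intro exp_weighted_integral_le) (auto simp: s_def mult_le_cancel_left1)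
  moreover have "exp (- \<mu> * s) * norm z0 \<le> norm z0"
    using assms by (simp add: s_def mult_left_le_one_le)
  moreover have "norm (z0 + integral {0..s} (\<lambda>_. F 0)) \<le> norm z0 + norm (integral {0..s} (\<lambda>_. F 0))"
    by (rule norm_triangle_ineq)
  then have "exp (- \<mu> * s) * norm (z0 + integral {0..s} (\<lambda>_. F 0))
      \<le> exp (- \<mu> * s) * norm z0 + exp (- \<mu> * s) * norm (integral {0..s} (\<lambda>_. F 0))"
    by (simp add: distrib_left[symmetric] mult_left_mono)
  ultimately show ?thesis
    unfolding weighted_picard_def s_def[symmetric] by simp
qed

lemma weighted_picard_bcontfun:
  assumes F: "L-lipschitz_on UNIV F" and \<mu>: "\<mu> > 0" "2 * L \<le> \<mu>"
  shows "weighted_picard F z0 \<mu> (apply_bcontfun y) \<in> bcontfun"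
proof (rule bcontfun_normI)
  let ?P = "weighted_picard F z0 \<mu>"
  show "continuous_on UNIV (?P y)"
    using weighted_picard_continuous[OF lipschitz_on_continuous_on[OF F]] by simp
  fix t
  have "norm (?P y t - ?P (\<lambda>_. 0) t) \<le> norm y / 2"
    by (rule weighted_picard_dist_le[OF F \<mu>]) (auto simp: norm_bounded)
  then show "norm (?P y t) \<le> norm z0 + norm (F 0) / \<mu> + norm y / 2"
    using weighted_picard_zero_le[OF \<mu>(1), of F z0 t] norm_triangle_sub[of "?P y t" "?P (\<lambda>_. 0) t"]
    by linarith
qed

lemma lipschitz_field_has_global_solution:
  fixes F :: "'a::banach \<Rightarrow> 'a"
  assumes F: "L-lipschitz_on UNIV F"
  shows "\<exists>x. x 0 = z0 \<and> (\<forall>t\<ge>0. (x has_vector_derivative F (x t)) (at t within {0..}))"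
proof -
  define \<mu> where "\<mu> = 2 * L + 1"
  have \<mu>: "\<mu> > 0" "2 * L \<le> \<mu>" using lipschitz_on_nonneg[OF F] by (auto simp: \<mu>_def)
  have Fc: "continuous_on UNIV F" using F by (rule lipschitz_on_continuous_on)
  let ?P = "weighted_picard F z0 \<mu>"
  define T where "T y = Bcontfun (?P (apply_bcontfun y))" for y
  have T_apply: "apply_bcontfun (T y) = ?P (apply_bcontfun y)" for y
    using weighted_picard_bcontfun[OF F \<mu>] by (simp add: T_def Bcontfun_inverse)
  have "dist (T y1) (T y2) \<le> 1/2 * dist y1 y2" for y1 y2
  proof (rule dist_bound)
    fix t
    have "norm (?P y1 t - ?P y2 t) \<le> dist y1 y2 / 2"
      by (rule weighted_picard_dist_le[OF F \<mu>]) (auto simp flip: dist_norm intro: dist_bounded)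
    then show "dist (T y1 t) (T y2 t) \<le> 1/2 * dist y1 y2"
      by (simp add: T_apply dist_norm)
  qed
  then obtain y where y: "T y = y" using banach_fix_type[of "1/2" T] by auto
  define g where "g r = F (exp (\<mu> * r) *\<^sub>R apply_bcontfun y r)" for r
  define x where "x t = z0 + integral {0..t} g" for t
  have "g t = F (x t)" if "t \<ge> 0" for t
  proof -
    have "apply_bcontfun y t = exp (- \<mu> * t) *\<^sub>R x t"
      using arg_cong[OF y, of "\<lambda>y. apply_bcontfun y t"] that
      by (simp add: T_apply weighted_picard_def x_def g_def[abs_def])
    then show ?thesis by (simp add: g_def exp_minus)
  qed
  moreover have "(x has_vector_derivative g t) (at t within {0..})" if "t \<ge> 0" for t
  proof -
    have "continuous_on UNIV g"
      unfolding g_def by (rule continuous_on_compose2[OF Fc]) (auto intro!: continuous_intros)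
    then show ?thesis
      unfolding x_def using that
      by (auto intro!: derivative_eq_intros integral_has_vector_derivative_nonneg)
  qed
  moreover have "x 0 = z0" by (simp add: x_def)
  ultimately show ?thesis by auto
qed

section \<open>Monotonicity and exponential decay on the half-line\<close>

lemma has_vector_derivative_at_if_within_nonneg:
  fixes x :: "real \<Rightarrow> 'a::real_normed_vector"
  assumes "(x has_vector_derivative D) (at t within {0..})" and "t > 0"
  shows "(x has_vector_derivative D) (at t)"
proof -
  have "at t within {0..} = at t"
    by (rule at_within_open_subset[of _ "{0<..}"]) (use assms in auto)
  then show ?thesis using assms by simp
qed

lemma continuous_on_nonneg_if_has_vector_derivative:
  assumes "\<And>t. t \<ge> 0 \<Longrightarrow> (x has_vector_derivative x' t) (at t within {0..})"
  shows "continuous_on {0..} x"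
  unfolding continuous_on_eq_continuous_within
  using assms has_vector_derivative_continuous by blast

lemma has_real_derivative_fst:
  "(x has_vector_derivative D) F \<Longrightarrow> ((\<lambda>t. fst (x t)) has_real_derivative fst D) F"
  unfolding has_vector_derivative_def has_field_derivative_def
  by (drule has_derivative_fst) (erule has_derivative_eq_rhs, simp add: fun_eq_iff)

lemma has_real_derivative_snd:
  "(x has_vector_derivative D) F \<Longrightarrow> ((\<lambda>t. snd (x t)) has_real_derivative snd D) F"
  unfolding has_vector_derivative_def has_field_derivative_def
  by (drule has_derivative_snd) (erule has_derivative_eq_rhs, simp add: fun_eq_iff)

lemma exponential_decay_if_derivative_le:
  fixes f f' :: "real \<Rightarrow> real"
  assumes "continuous_on {0..} f"
    and "\<And>t. t > 0 \<Longrightarrow> (f has_real_derivative f' t) (at t)"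
    and "\<And>t. t > 0 \<Longrightarrow> f' t \<le> - \<delta> * f t"
    and "t \<ge> 0"
  shows "f t \<le> exp (- \<delta> * t) * f 0"
proof -
  have "exp (\<delta> * t) * f t \<le> exp (\<delta> * 0) * f 0"
  proof (rule DERIV_nonpos_imp_decreasing_open[OF \<open>t \<ge> 0\<close>])
    show "continuous_on {0..t} (\<lambda>s. exp (\<delta> * s) * f s)"
      using assms(1) by (auto intro!: continuous_intros intro: continuous_on_subset)
    fix s :: real assume "0 < s" "s < t"
    then have "((\<lambda>s. exp (\<delta> * s) * f s) has_real_derivative exp (\<delta> * s) * (\<delta> * f s + f' s)) (at s)"
      using assms(2) by (auto intro!: derivative_eq_intros simp: algebra_simps)
    moreover have "exp (\<delta> * s) * (\<delta> * f s + f' s) \<le> 0"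
      using assms(3)[OF \<open>0 < s\<close>] by (simp add: mult_nonneg_nonpos)
    ultimately show "\<exists>d. ((\<lambda>s. exp (\<delta> * s) * f s) has_real_derivative d) (at s) \<and> d \<le> 0"
      by blast
  qed
  then show ?thesis by (simp add: exp_minus field_simps)
qed

lemma le_initial_if_nonincreasing_below_level:
  fixes g :: "real \<Rightarrow> real"
  assumes g: "continuous_on {0..} g" and "g 0 < d"
    and decr: "\<And>s. s > 0 \<Longrightarrow> (\<forall>r\<in>{0..<s}. g r < d) \<Longrightarrow> g s \<le> g 0"
    and "t \<ge> 0"
  shows "g t \<le> g 0"
proof (rule ccontr)
  assume "\<not> g t \<le> g 0"
  define \<theta> where "\<theta> = min (g t) d"
  have \<theta>: "g 0 < \<theta>" "\<theta> \<le> d" using \<open>\<not> g t \<le> g 0\<close> \<open>g 0 < d\<close> by (auto simp: \<theta>_def)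
  define S where "S = {0..t} \<inter> g -` {\<theta>..}"
  have "t \<in> S" using \<open>t \<ge> 0\<close> by (simp add: S_def \<theta>_def)
  have "closed S"
    unfolding S_def using continuous_on_subset[OF g, of "{0..t}"]
    by (intro continuous_closed_preimage) auto
  moreover have "bdd_below S" unfolding S_def by (rule bdd_belowI[of _ 0]) auto
  ultimately have "Inf S \<in> S" using closed_contains_Inf \<open>t \<in> S\<close> by blast
  then have "Inf S \<ge> 0" "\<theta> \<le> g (Inf S)" by (auto simp: S_def)
  moreover have "g r < d" if "0 \<le> r" "r < Inf S" for r
  proof -
    have "r \<notin> S" using that cInf_lower[OF _ \<open>bdd_below S\<close>, of r] by auto
    then show ?thesis using that \<open>Inf S \<in> S\<close> \<theta> by (auto simp: S_def)
  qed
  moreover have "Inf S \<noteq> 0" using \<open>\<theta> \<le> g (Inf S)\<close> \<theta>(1) by auto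
  ultimately have "g (Inf S) \<le> g 0" using decr by auto
  then show False using \<open>\<theta> \<le> g (Inf S)\<close> \<theta>(1) by linarith
qed

section \<open>Energy and strict Lyapunov function\<close>

definition exp_excess :: "real \<Rightarrow> real" where
  "exp_excess p = exp p - 1 - p"

lemma exp_excess_nonneg: "exp_excess p \<ge> 0"
  unfolding exp_excess_def using exp_ge_add_one_self[of p] by linarith

lemma abs_le_one_plus_exp_excess: "\<bar>p\<bar> \<le> 1 + exp_excess p"
proof (cases "p \<ge> 0")
  case True
  have "0 \<le> (p - 1)\<^sup>2 / 2" by simp
  then show ?thesis
    using exp_lower_Taylor_quadratic[OF True] True
    unfolding exp_excess_def by (simp add: power2_eq_square algebra_simps)
next
  case False
  then show ?thesis unfolding exp_excess_def using exp_gt_zero[of p] by simp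
qed

lemma exp_half_minus_one_sq_le_exp_excess: "(exp (p/2) - 1)\<^sup>2 \<le> exp_excess p"
proof -
  have "exp p = exp (p/2) * exp (p/2)" by (simp add: exp_add[symmetric])
  then have "exp_excess p - (exp (p/2) - 1)\<^sup>2 = 2 * (exp (p/2) - 1 - p/2)"
    unfolding exp_excess_def by (simp add: power2_eq_square algebra_simps)
  then show ?thesis using exp_ge_add_one_self[of "p/2"] by (smt (verit))
qed

lemma exp_excess_le: "exp_excess p \<le> (exp p - 1)\<^sup>2 * exp (- p)"
proof -
  have "(exp p - 1)\<^sup>2 * exp (- p) = exp p - 2 + exp (- p)"
    by (simp add: power2_eq_square algebra_simps exp_minus field_simps)
  then show ?thesis
    unfolding exp_excess_def using exp_ge_add_one_self[of "- p"] by simp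
qed

lemma exp_minus_one_sq_le:
  assumes "p \<le> P" and "P \<ge> 0"
  shows "(exp p - 1)\<^sup>2 \<le> (exp P + 1)\<^sup>2 * exp_excess p"
proof -
  define w where "w = exp (p/2)"
  have "exp p = w * w" unfolding w_def by (simp add: exp_add[symmetric])
  then have "(exp p - 1)\<^sup>2 = (w + 1)\<^sup>2 * (w - 1)\<^sup>2" by (simp add: power2_eq_square algebra_simps)
  also have "\<dots> \<le> (exp P + 1)\<^sup>2 * exp_excess p"
  proof (rule mult_mono)
    have "w \<le> exp P" unfolding w_def using assms by simp
    then show "(w + 1)\<^sup>2 \<le> (exp P + 1)\<^sup>2" by (intro power_mono) (auto simp: w_def)
    show "(w - 1)\<^sup>2 \<le> exp_excess p"
      unfolding w_def by (rule exp_half_minus_one_sq_le_exp_excess)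
  qed simp_all
  finally show ?thesis .
qed

lemma abs_less_if_exp_excess_less:
  assumes "r > 0"
  obtains m where "m > 0" and "\<And>p. exp_excess p < m \<Longrightarrow> \<bar>p\<bar> < r"
proof
  define m where "m = min ((exp (r/2) - 1)\<^sup>2) ((exp (- r/2) - 1)\<^sup>2)"
  show "m > 0" using assms by (simp add: m_def)
  fix p assume small: "exp_excess p < m"
  show "\<bar>p\<bar> < r"
  proof (rule ccontr)
    assume "\<not> \<bar>p\<bar> < r"
    then consider "r \<le> p" | "p \<le> - r" by linarith
    then have "(exp (r/2) - 1)\<^sup>2 \<le> (exp (p/2) - 1)\<^sup>2 \<or> (exp (- r/2) - 1)\<^sup>2 \<le> (exp (p/2) - 1)\<^sup>2"
    proof cases
      case 1
      then show ?thesis using assms by (intro disjI1 power_mono) auto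
    next
      case 2
      then have "(1 - exp (- r/2))\<^sup>2 \<le> (1 - exp (p/2))\<^sup>2" using assms by (intro power_mono) auto
      then show ?thesis by (simp add: power2_commute)
    qed
    then have "m \<le> exp_excess p"
      using exp_half_minus_one_sq_le_exp_excess[of p] unfolding m_def by linarith
    then show False using small by simp
  qed
qed

definition rc_energy :: "real \<Rightarrow> real \<times> real \<Rightarrow> real" where
  "rc_energy k z = k * exp_excess (fst z) + (snd z)\<^sup>2 / 2"

lemma rc_energy_nonneg: "k \<ge> 0 \<Longrightarrow> rc_energy k z \<ge> 0"
  unfolding rc_energy_def using exp_excess_nonneg[of "fst z"] by simp

lemma rc_energy_zero [simp]: "rc_energy k 0 = 0"
  by (simp add: rc_energy_def exp_excess_def)

lemma continuous_on_rc_energy: "continuous_on S (rc_energy k)"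
  unfolding rc_energy_def exp_excess_def by (intro continuous_intros) auto

lemma abs_fst_le_if_rc_energy_le:
  assumes "k > 0" and "rc_energy k z \<le> C"
  shows "\<bar>fst z\<bar> \<le> 1 + C / k"
proof -
  have "k * exp_excess (fst z) \<le> C"
    using assms zero_le_power2[of "snd z"] unfolding rc_energy_def by linarith
  then have "exp_excess (fst z) \<le> C / k" using assms by (simp add: field_simps)
  then show ?thesis using abs_le_one_plus_exp_excess[of "fst z"] by linarith
qed

lemma norm_small_if_rc_energy_small:
  assumes k: "k > 0" and \<epsilon>: "\<epsilon> > 0"
  obtains \<eta> where "\<eta> > 0" and "\<And>z. rc_energy k z < \<eta> \<Longrightarrow> norm z < \<epsilon>"
proof -
  obtain m where m: "m > 0" "\<And>p. exp_excess p < m \<Longrightarrow> \<bar>p\<bar> < \<epsilon> / 2"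
    using abs_less_if_exp_excess_less[of "\<epsilon> / 2"] \<epsilon> by auto
  show ?thesis
  proof
    show "min (k * m) ((\<epsilon> / 2)\<^sup>2 / 2) > 0" using k m \<epsilon> by simp
    fix z :: "real \<times> real"
    assume small: "rc_energy k z < min (k * m) ((\<epsilon> / 2)\<^sup>2 / 2)"
    have "k * exp_excess (fst z) \<ge> 0" "(snd z)\<^sup>2 / 2 \<ge> 0"
      using k exp_excess_nonneg[of "fst z"] by simp_all
    then have "k * exp_excess (fst z) < k * m" "(snd z)\<^sup>2 < (\<epsilon> / 2)\<^sup>2"
      using small unfolding rc_energy_def by linarith+
    then have "\<bar>fst z\<bar> < \<epsilon> / 2" "\<bar>snd z\<bar> < \<bar>\<epsilon> / 2\<bar>"
      using m(2) k by (simp_all add: abs_le_square_iff[symmetric] not_le[symmetric])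
    then show "norm z < \<epsilon>"
      using norm_Pair_le[of "fst z" "snd z"] by simp
  qed
qed

definition rc_lyapunov :: "real \<Rightarrow> real \<Rightarrow> real \<times> real \<Rightarrow> real" where
  "rc_lyapunov k e z = rc_energy k z + e * snd z * (exp (fst z) - 1)"

lemma continuous_on_rc_lyapunov: "continuous_on S (rc_lyapunov k e)"
  unfolding rc_lyapunov_def by (intro continuous_intros continuous_on_rc_energy)

definition rc_lyapunov_rate :: "real \<Rightarrow> real \<Rightarrow> real \<Rightarrow> real \<times> real \<Rightarrow> real" where
  "rc_lyapunov_rate \<rho> k e z =
     - (k * \<rho> - e * k) * (exp (fst z) - 1)\<^sup>2
     - e * \<rho> * exp (fst z) * snd z * (exp (fst z) - 1) - e * exp (fst z) * (snd z)\<^sup>2"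

lemma rc_lyapunov_has_derivative:
  assumes "(x has_vector_derivative rc_field \<beta> \<alpha> \<rho> (x t)) (at t within S)"
  shows "((\<lambda>t. rc_lyapunov (\<beta> * \<alpha> * \<rho>) e (x t)) has_real_derivative
      rc_lyapunov_rate \<rho> (\<beta> * \<alpha> * \<rho>) e (x t)) (at t within S)"
proof -
  note p' = has_real_derivative_fst[OF assms] and q' = has_real_derivative_snd[OF assms]
  show ?thesis
    unfolding rc_lyapunov_def rc_energy_def exp_excess_def
    by (rule derivative_eq_intros p' q' refl | simp)+
      (simp add: rc_lyapunov_rate_def rc_field_def power2_eq_square algebra_simps)
qed

lemma rc_energy_antimono:
  assumes "a \<le> b" and x: "continuous_on {a..b} x"
    and x': "\<And>s. a < s \<Longrightarrow> s < b \<Longrightarrow> (x has_vector_derivative rc_field \<beta> \<alpha> \<rho> (x s)) (at s)"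
    and "0 \<le> \<beta> * \<alpha> * \<rho>" and "0 \<le> \<rho>"
  shows "rc_energy (\<beta> * \<alpha> * \<rho>) (x b) \<le> rc_energy (\<beta> * \<alpha> * \<rho>) (x a)"
proof (rule DERIV_nonpos_imp_decreasing_open[OF \<open>a \<le> b\<close>])
  show "continuous_on {a..b} (\<lambda>t. rc_energy (\<beta> * \<alpha> * \<rho>) (x t))"
    by (rule continuous_on_compose2[OF continuous_on_rc_energy x]) auto
  fix s assume "a < s" "s < b"
  from rc_lyapunov_has_derivative[OF x'[OF this], of 0]
  have "((\<lambda>t. rc_energy (\<beta> * \<alpha> * \<rho>) (x t)) has_real_derivative
      - (\<beta> * \<alpha> * \<rho> * \<rho>) * (exp (fst (x s)) - 1)\<^sup>2) (at s)"
    by (simp add: rc_lyapunov_def rc_lyapunov_rate_def)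
  then show "\<exists>d. ((\<lambda>t. rc_energy (\<beta> * \<alpha> * \<rho>) (x t)) has_real_derivative d) (at s) \<and> d \<le> 0"
    using assms by (intro exI conjI) (auto simp: mult_nonneg_nonneg)
qed

lemma rc_solution_continuous: "rc_solution \<beta> \<alpha> \<rho> x \<Longrightarrow> continuous_on {0..} x"
  unfolding rc_solution_def by (rule continuous_on_nonneg_if_has_vector_derivative) blast

lemma rc_solution_energy_antimono:
  assumes sol: "rc_solution \<beta> \<alpha> \<rho> x" and "0 \<le> s" "s \<le> t"
    and "0 \<le> \<beta> * \<alpha> * \<rho>" and "0 \<le> \<rho>"
  shows "rc_energy (\<beta> * \<alpha> * \<rho>) (x t) \<le> rc_energy (\<beta> * \<alpha> * \<rho>) (x s)"
proof (rule rc_energy_antimono)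
  show "continuous_on {s..t} x"
    using rc_solution_continuous[OF sol] by (rule continuous_on_subset) (use assms in auto)
  show "(x has_vector_derivative rc_field \<beta> \<alpha> \<rho> (x r)) (at r)" if "s < r" "r < t" for r
    using sol that \<open>0 \<le> s\<close>
    by (intro has_vector_derivative_at_if_within_nonneg) (auto simp: rc_solution_def)
qed (use assms in auto)

lemma abs_cross_term_le_rc_energy:
  assumes k: "k > 0" and "e \<ge> 0" and p: "\<bar>fst z\<bar> \<le> P"
    and small: "e * (2 + (exp P + 1)\<^sup>2 / k) \<le> 1"
  shows "\<bar>e * snd z * (exp (fst z) - 1)\<bar> \<le> rc_energy k z / 2"
proof -
  define u where "u = exp (fst z) - 1"
  define q where "q = snd z"
  define V where "V = rc_energy k z"
  have h: "0 \<le> exp_excess (fst z)" by (rule exp_excess_nonneg)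
  have "u\<^sup>2 \<le> (exp P + 1)\<^sup>2 * exp_excess (fst z)"
    unfolding u_def by (rule exp_minus_one_sq_le) (use p in auto)
  also have "\<dots> \<le> (exp P + 1)\<^sup>2 / k * V"
    using k zero_le_power2[of q] unfolding V_def rc_energy_def q_def by (simp add: field_simps)
  finally have u2: "u\<^sup>2 \<le> (exp P + 1)\<^sup>2 / k * V" .
  have q2: "q\<^sup>2 \<le> 2 * V"
    using k h unfolding V_def rc_energy_def q_def by simp
  have "2 * \<bar>q * u\<bar> \<le> q\<^sup>2 + u\<^sup>2"
    using zero_le_power2[of "\<bar>q\<bar> - \<bar>u\<bar>"] by (simp add: power2_eq_square algebra_simps abs_mult)
  also have "\<dots> \<le> (2 + (exp P + 1)\<^sup>2 / k) * V"
    using u2 q2 by (simp add: algebra_simps)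
  finally have "2 * \<bar>e * q * u\<bar> \<le> e * (2 + (exp P + 1)\<^sup>2 / k) * V"
    using \<open>e \<ge> 0\<close> mult_left_mono by (fastforce simp: abs_mult mult.assoc)
  also have "\<dots> \<le> V"
    using mult_right_mono[OF small, of V] rc_energy_nonneg[of k z] k unfolding V_def by simp
  finally show ?thesis unfolding u_def q_def V_def by simp
qed

lemma rc_energy_le_squares:
  assumes "k \<ge> 0" and "\<bar>fst z\<bar> \<le> P"
  shows "rc_energy k z \<le> (k * exp P + 1) * ((exp (fst z) - 1)\<^sup>2 + (snd z)\<^sup>2)"
proof -
  have "exp_excess (fst z) \<le> (exp (fst z) - 1)\<^sup>2 * exp P"
    using exp_excess_le[of "fst z"] assms(2)
    by (smt (verit, best) exp_le_cancel_iff mult_left_mono zero_le_power2)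
  then have "k * exp_excess (fst z) \<le> k * exp P * (exp (fst z) - 1)\<^sup>2"
    using assms(1) by (simp add: mult_left_mono ac_simps)
  moreover have "0 \<le> k * exp P * (snd z)\<^sup>2" using assms(1) by simp
  moreover have "(k * exp P + 1) * ((exp (fst z) - 1)\<^sup>2 + (snd z)\<^sup>2)
      = k * exp P * (exp (fst z) - 1)\<^sup>2 + k * exp P * (snd z)\<^sup>2 + (exp (fst z) - 1)\<^sup>2 + (snd z)\<^sup>2"
    by (simp add: algebra_simps)
  ultimately show ?thesis
    using zero_le_power2[of "exp (fst z) - 1"] zero_le_power2[of "snd z"]
    unfolding rc_energy_def by linarith
qed

lemma rc_lyapunov_rate_le:
  assumes e: "e \<ge> 0" and p: "\<bar>fst z\<bar> \<le> P"
    and small: "e * (2 * k + exp P * \<rho>\<^sup>2) \<le> k * \<rho>"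
  shows "rc_lyapunov_rate \<rho> k e z \<le> - (k * \<rho> / 2) * (exp (fst z) - 1)\<^sup>2 - e / (2 * exp P) * (snd z)\<^sup>2"
proof -
  define u where "u = exp (fst z) - 1"
  define q where "q = snd z"
  define E where "E = exp P"
  define w where "w = exp (fst z)"
  have "exp (- P) \<le> w" using p by (simp add: w_def)
  then have w: "w > 0" "w \<le> E" "1 / E \<le> w"
    using p by (auto simp: E_def w_def exp_minus inverse_eq_divide)
  have rate: "rc_lyapunov_rate \<rho> k e z = - (k * \<rho> * u\<^sup>2) + e * k * u\<^sup>2 - e * \<rho> * w * q * u - e * w * q\<^sup>2"
    by (simp add: rc_lyapunov_rate_def u_def q_def w_def algebra_simps)
  have "- (\<rho> * q * u) \<le> (q\<^sup>2 + \<rho>\<^sup>2 * u\<^sup>2) / 2"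
    using zero_le_power2[of "q + \<rho> * u"] by (simp add: power2_eq_square algebra_simps)
  from mult_left_mono[OF this, of "e * w"]
  have cross: "- (e * \<rho> * w * q * u) \<le> e * w * q\<^sup>2 / 2 + e * w * \<rho>\<^sup>2 * u\<^sup>2 / 2"
    using e w by (simp add: algebra_simps)
  have "e * w * \<rho>\<^sup>2 * u\<^sup>2 \<le> e * E * \<rho>\<^sup>2 * u\<^sup>2"
    using e w by (intro mult_right_mono mult_left_mono) auto
  moreover have "e / E * q\<^sup>2 \<le> e * w * q\<^sup>2"
    using mult_left_mono[OF w(3) e] by (intro mult_right_mono) auto
  moreover have "e * k * u\<^sup>2 + e * E * \<rho>\<^sup>2 * u\<^sup>2 / 2 \<le> k * \<rho> * u\<^sup>2 / 2"
    using mult_right_mono[OF small, of "u\<^sup>2 / 2"] by (simp add: E_def algebra_simps)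
  moreover have "e / (2 * E) * q\<^sup>2 = e / E * q\<^sup>2 / 2" "- (k * \<rho> / 2) * u\<^sup>2 = - (k * \<rho> * u\<^sup>2 / 2)"
    by simp_all
  ultimately show ?thesis
    using rate cross unfolding u_def[symmetric] q_def[symmetric] E_def[symmetric] by linarith
qed

lemma rc_lyapunov_rate_le_lyapunov:
  assumes k: "k > 0" and \<rho>: "\<rho> \<ge> 0" and e: "e \<ge> 0" and p: "\<bar>fst z\<bar> \<le> P"
    and small: "e * (2 + (exp P + 1)\<^sup>2 / k) \<le> 1" "e * (2 * k + exp P * \<rho>\<^sup>2) \<le> k * \<rho>"
  defines "\<gamma> \<equiv> min (k * \<rho> / 2) (e / (2 * exp P))" and "A \<equiv> k * exp P + 1"
  shows "rc_energy k z \<le> 2 * rc_lyapunov k e z"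
    and "rc_lyapunov_rate \<rho> k e z \<le> - (2 * \<gamma> / (3 * A)) * rc_lyapunov k e z"
proof -
  define u where "u = exp (fst z) - 1"
  define V where "V = rc_energy k z"
  define W where "W = rc_lyapunov k e z"
  have \<gamma>: "\<gamma> \<ge> 0" and A: "A > 0" using k \<rho> e by (auto simp: \<gamma>_def A_def add_pos_nonneg)
  have "\<bar>W - V\<bar> \<le> V / 2"
    using abs_cross_term_le_rc_energy[OF k e p small(1)] by (simp add: W_def V_def rc_lyapunov_def)
  then show "rc_energy k z \<le> 2 * rc_lyapunov k e z" unfolding V_def W_def by linarith
  have "rc_lyapunov_rate \<rho> k e z \<le> - (k * \<rho> / 2) * u\<^sup>2 - e / (2 * exp P) * (snd z)\<^sup>2"
    unfolding u_def by (rule rc_lyapunov_rate_le[OF e p small(2)])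
  also have "\<dots> \<le> - \<gamma> * (u\<^sup>2 + (snd z)\<^sup>2)"
  proof -
    have "\<gamma> * u\<^sup>2 \<le> (k * \<rho> / 2) * u\<^sup>2" "\<gamma> * (snd z)\<^sup>2 \<le> e / (2 * exp P) * (snd z)\<^sup>2"
      unfolding \<gamma>_def by (intro mult_right_mono; simp)+
    then show ?thesis by (simp add: algebra_simps)
  qed
  also have "\<dots> \<le> - \<gamma> * (V / A)"
  proof -
    have "V \<le> A * (u\<^sup>2 + (snd z)\<^sup>2)"
      unfolding V_def A_def u_def using rc_energy_le_squares[OF _ p] k by simp
    then have "V / A \<le> u\<^sup>2 + (snd z)\<^sup>2" using A by (simp add: divide_le_eq mult.commute)
    then show ?thesis using \<gamma> mult_left_mono[of "V / A" _ \<gamma>] by simp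
  qed
  also have "\<dots> \<le> - (2 * \<gamma> / (3 * A)) * W"
  proof -
    have "2 * W \<le> 3 * V" using \<open>\<bar>W - V\<bar> \<le> V / 2\<close> by linarith
    then have "2 * W * \<gamma> \<le> 3 * V * \<gamma>" using \<gamma> by (rule mult_right_mono)
    then show ?thesis using A by (simp add: field_simps)
  qed
  finally show "rc_lyapunov_rate \<rho> k e z \<le> - (2 * \<gamma> / (3 * A)) * rc_lyapunov k e z"
    unfolding W_def .
qed

lemma rc_lyapunov_decay_rate:
  assumes k: "k > 0" and \<rho>: "\<rho> > 0"
  obtains e \<delta> where "\<delta> > 0"
    and "\<And>z. \<bar>fst z\<bar> \<le> P \<Longrightarrow> rc_energy k z \<le> 2 * rc_lyapunov k e z"
    and "\<And>z. \<bar>fst z\<bar> \<le> P \<Longrightarrow> rc_lyapunov_rate \<rho> k e z \<le> - \<delta> * rc_lyapunov k e z"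
proof -
  define E where "E = exp P"
  define e where "e = min (1 / (2 + (E + 1)\<^sup>2 / k)) (k * \<rho> / (2 * k + E * \<rho>\<^sup>2))"
  have "0 < 2 + (E + 1)\<^sup>2 / k" "0 < 2 * k + E * \<rho>\<^sup>2"
    using k by (auto simp: E_def add_pos_nonneg)
  moreover have "e \<le> 1 / (2 + (E + 1)\<^sup>2 / k)" "e \<le> k * \<rho> / (2 * k + E * \<rho>\<^sup>2)"
    by (simp_all add: e_def)
  ultimately have e: "e > 0" "e * (2 + (exp P + 1)\<^sup>2 / k) \<le> 1" "e * (2 * k + exp P * \<rho>\<^sup>2) \<le> k * \<rho>"
    using k \<rho> by (auto simp: e_def E_def[symmetric] le_divide_eq)
  show ?thesis
  proof (rule that)
    show "2 * min (k * \<rho> / 2) (e / (2 * exp P)) / (3 * (k * exp P + 1)) > 0"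
      using k \<rho> e(1) by (simp add: add_pos_nonneg)
    fix z :: "real \<times> real" assume p: "\<bar>fst z\<bar> \<le> P"
    note estimates = rc_lyapunov_rate_le_lyapunov[OF k less_imp_le[OF \<rho>] less_imp_le[OF e(1)] p e(2,3)]
    show "rc_energy k z \<le> 2 * rc_lyapunov k e z"
      by (rule estimates(1))
    show "rc_lyapunov_rate \<rho> k e z
        \<le> - (2 * min (k * \<rho> / 2) (e / (2 * exp P)) / (3 * (k * exp P + 1))) * rc_lyapunov k e z"
      by (rule estimates(2))
  qed
qed

section \<open>Existence, stability and convergence\<close>

lemma rc_field_capped_lipschitz:
  "\<exists>L. L-lipschitz_on UNIV (\<lambda>z. rc_field \<beta> \<alpha> \<rho> (min (fst z) M, snd z))"
proof -
  have "(exp M)-lipschitz_on {..M} exp"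
  proof (rule lipschitz_on_leI)
    fix a b :: real assume "a \<in> {..M}" "b \<in> {..M}" "a \<le> b"
    have "exp b - exp a = exp b * (1 - exp (a - b))" by (simp add: exp_diff field_simps)
    also have "\<dots> \<le> exp b * (b - a)"
    proof (rule mult_left_mono)
      show "1 - exp (a - b) \<le> b - a" using exp_ge_add_one_self[of "a - b"] by linarith
    qed simp
    also have "\<dots> \<le> exp M * (b - a)"
      using \<open>b \<in> {..M}\<close> \<open>a \<le> b\<close> by (intro mult_right_mono) auto
    finally show "dist (exp a) (exp b) \<le> exp M * dist a b"
      using \<open>a \<le> b\<close> by (simp add: dist_real_def)
  qed simp
  moreover have "1-lipschitz_on UNIV (\<lambda>z::real \<times> real. min (fst z) M)"
    by (rule lipschitz_onI) (auto simp: dist_real_def min_def intro: order_trans[OF _ dist_fst_le])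
  ultimately have exp_lip: "(exp M * 1)-lipschitz_on UNIV (\<lambda>z::real \<times> real. exp (min (fst z) M))"
    by (intro lipschitz_on_compose2) (auto intro: lipschitz_on_subset)
  have snd_lip: "1-lipschitz_on UNIV (\<lambda>z::real \<times> real. snd z)"
    by (rule lipschitz_onI) (auto intro: dist_snd_le)
  show ?thesis
    unfolding rc_field_def fst_conv snd_conv
    by (rule exI lipschitz_on_Pair lipschitz_on_diff lipschitz_on_cmult_real lipschitz_on_constant
        exp_lip snd_lip)+
qed

lemma rc_solution_exists:
  assumes "\<beta> > 0" and "\<alpha> > 0" and "\<rho> > 0"
  shows "\<exists>x. rc_solution \<beta> \<alpha> \<rho> x \<and> x 0 = z0"
proof -
  define k where "k = \<beta> * \<alpha> * \<rho>"
  have k: "k > 0" using assms by (simp add: k_def)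
  define c where "c = rc_energy k z0"
  define M where "M = 1 + (c + 1) / k"
  define F where "F z = rc_field \<beta> \<alpha> \<rho> (min (fst z) M, snd z)" for z
  have F_eq: "F z = rc_field \<beta> \<alpha> \<rho> z" if "rc_energy k z \<le> c + 1" for z
    using abs_fst_le_if_rc_energy_le[OF k that] by (simp add: F_def M_def)
  obtain L where "L-lipschitz_on UNIV F"
    using rc_field_capped_lipschitz unfolding F_def[abs_def] by blast
  then obtain x where x0: "x 0 = z0"
    and x': "\<forall>t\<ge>0. (x has_vector_derivative F (x t)) (at t within {0..})"
    using lipschitz_field_has_global_solution by blast
  have xc: "continuous_on {0..} x"
    using x' by (intro continuous_on_nonneg_if_has_vector_derivative) auto
  have "rc_energy k (x t) \<le> rc_energy k (x 0)" if "t \<ge> 0" for t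
  proof (rule le_initial_if_nonincreasing_below_level[where d = "c + 1"])
    show "continuous_on {0..} (\<lambda>t. rc_energy k (x t))"
      by (rule continuous_on_compose2[OF continuous_on_rc_energy xc]) auto
    show "rc_energy k (x 0) < c + 1" by (simp add: x0 c_def)
    fix s :: real assume "s > 0" and below: "\<forall>r\<in>{0..<s}. rc_energy k (x r) < c + 1"
    show "rc_energy k (x s) \<le> rc_energy k (x 0)"
      unfolding k_def
    proof (rule rc_energy_antimono)
      show "continuous_on {0..s} x" using xc by (rule continuous_on_subset) auto
      fix r assume "0 < r" "r < s"
      then have "(x has_vector_derivative F (x r)) (at r)"
        using x' by (intro has_vector_derivative_at_if_within_nonneg) auto
      moreover have "F (x r) = rc_field \<beta> \<alpha> \<rho> (x r)"
        using below \<open>0 < r\<close> \<open>r < s\<close> by (intro F_eq less_imp_le) auto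
      ultimately show "(x has_vector_derivative rc_field \<beta> \<alpha> \<rho> (x r)) (at r)" by simp
    qed (use assms \<open>s > 0\<close> in auto)
  qed (use that in auto)
  then have "F (x t) = rc_field \<beta> \<alpha> \<rho> (x t)" if "t \<ge> 0" for t
    using that by (intro F_eq) (simp add: x0 c_def add_increasing2)
  then have "rc_solution \<beta> \<alpha> \<rho> x"
    unfolding rc_solution_def using x' by simp
  then show ?thesis using x0 by blast
qed

lemma rc_solution_stable:
  assumes "\<beta> > 0" and "\<alpha> > 0" and "\<rho> > 0" and "\<epsilon> > 0"
  shows "\<exists>\<delta>>0. \<forall>x. rc_solution \<beta> \<alpha> \<rho> x \<and> norm (x 0) < \<delta> \<longrightarrow> (\<forall>t\<ge>0. norm (x t) < \<epsilon>)"
proof -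
  define k where "k = \<beta> * \<alpha> * \<rho>"
  have k: "k > 0" using assms by (simp add: k_def)
  obtain \<eta> where "\<eta> > 0" and \<eta>: "\<And>z. rc_energy k z < \<eta> \<Longrightarrow> norm z < \<epsilon>"
    using norm_small_if_rc_energy_small[OF k \<open>\<epsilon> > 0\<close>] by blast
  have "isCont (rc_energy k) 0"
    using continuous_on_rc_energy[of UNIV k] by (simp add: continuous_on_eq_continuous_at del: split_paired_All)
  then obtain \<delta> where "\<delta> > 0" and \<delta>: "\<And>z. norm z < \<delta> \<Longrightarrow> rc_energy k z < \<eta>"
    using \<open>\<eta> > 0\<close> unfolding continuous_at_eps_delta by (force simp: dist_norm)
  have "norm (x t) < \<epsilon>" if "rc_solution \<beta> \<alpha> \<rho> x" "norm (x 0) < \<delta>" "t \<ge> 0" for x t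
  proof (rule \<eta>)
    have "rc_energy k (x t) \<le> rc_energy k (x 0)"
      unfolding k_def by (rule rc_solution_energy_antimono) (use that assms in auto)
    then show "rc_energy k (x t) < \<eta>" using \<delta>[OF \<open>norm (x 0) < \<delta>\<close>] by linarith
  qed
  then show ?thesis using \<open>\<delta> > 0\<close> by blast
qed

lemma tendsto_zero_if_rc_energy_tendsto_zero:
  assumes k: "k > 0" and energy: "((\<lambda>t. rc_energy k (x t)) \<longlongrightarrow> 0) F"
  shows "(x \<longlongrightarrow> 0) F"
proof (rule tendstoI)
  fix \<epsilon> :: real assume "\<epsilon> > 0"
  then obtain \<eta> where "\<eta> > 0" and \<eta>: "\<And>z. rc_energy k z < \<eta> \<Longrightarrow> norm z < \<epsilon>"
    using norm_small_if_rc_energy_small[OF k] by blast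
  show "\<forall>\<^sub>F t in F. dist (x t) 0 < \<epsilon>"
    using order_tendstoD(2)[OF energy \<open>\<eta> > 0\<close>] by eventually_elim (simp add: \<eta>)
qed

lemma rc_solution_energy_decay:
  assumes "\<beta> > 0" and "\<alpha> > 0" and \<rho>: "\<rho> > 0" and sol: "rc_solution \<beta> \<alpha> \<rho> x"
  obtains C \<delta> where "\<delta> > 0" and "\<And>t. t \<ge> 0 \<Longrightarrow> rc_energy (\<beta> * \<alpha> * \<rho>) (x t) \<le> C * exp (- \<delta> * t)"
proof -
  define k where "k = \<beta> * \<alpha> * \<rho>"
  have k: "k > 0" using assms by (simp add: k_def)
  define P where "P = 1 + rc_energy k (x 0) / k"
  have p: "\<bar>fst (x t)\<bar> \<le> P" if "t \<ge> 0" for t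
    unfolding P_def using k
    by (intro abs_fst_le_if_rc_energy_le) (use \<rho> in \<open>auto simp: k_def intro!: rc_solution_energy_antimono[OF sol] that\<close>)
  obtain e \<delta> where "\<delta> > 0"
    and energy_le: "\<And>z. \<bar>fst z\<bar> \<le> P \<Longrightarrow> rc_energy k z \<le> 2 * rc_lyapunov k e z"
    and rate_le: "\<And>z. \<bar>fst z\<bar> \<le> P \<Longrightarrow> rc_lyapunov_rate \<rho> k e z \<le> - \<delta> * rc_lyapunov k e z"
    using rc_lyapunov_decay_rate[OF k \<rho>] by blast
  have decay: "rc_lyapunov k e (x t) \<le> exp (- \<delta> * t) * rc_lyapunov k e (x 0)" if "t \<ge> 0" for t
  proof (rule exponential_decay_if_derivative_le[OF _ _ _ that])
    show "continuous_on {0..} (\<lambda>t. rc_lyapunov k e (x t))"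
      by (rule continuous_on_compose2[OF continuous_on_rc_lyapunov rc_solution_continuous[OF sol]]) auto
    show "((\<lambda>t. rc_lyapunov k e (x t)) has_real_derivative rc_lyapunov_rate \<rho> k e (x s)) (at s)"
      if "s > 0" for s
      unfolding k_def using sol that
      by (intro rc_lyapunov_has_derivative has_vector_derivative_at_if_within_nonneg) (auto simp: rc_solution_def)
    show "rc_lyapunov_rate \<rho> k e (x s) \<le> - \<delta> * rc_lyapunov k e (x s)" if "s > 0" for s
      using that by (intro rate_le p) simp
  qed
  show ?thesis
  proof (rule that[OF \<open>\<delta> > 0\<close>])
    fix t :: real assume "t \<ge> 0"
    have "rc_energy k (x t) \<le> 2 * rc_lyapunov k e (x t)"
      using \<open>t \<ge> 0\<close> by (intro energy_le p)
    also have "\<dots> \<le> 2 * (exp (- \<delta> * t) * rc_lyapunov k e (x 0))"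
      using decay[OF \<open>t \<ge> 0\<close>] by simp
    finally show "rc_energy (\<beta> * \<alpha> * \<rho>) (x t) \<le> 2 * rc_lyapunov k e (x 0) * exp (- \<delta> * t)"
      by (simp add: k_def mult_ac)
  qed
qed

lemma rc_solution_tendsto_zero:
  assumes "\<beta> > 0" and "\<alpha> > 0" and "\<rho> > 0" and sol: "rc_solution \<beta> \<alpha> \<rho> x"
  shows "(x \<longlongrightarrow> 0) at_top"
proof -
  obtain C \<delta> where "\<delta> > 0" and decay: "\<And>t. t \<ge> 0 \<Longrightarrow> rc_energy (\<beta> * \<alpha> * \<rho>) (x t) \<le> C * exp (- \<delta> * t)"
    using rc_solution_energy_decay[OF assms] by blast
  have k: "\<beta> * \<alpha> * \<rho> > 0" using assms by simp
  have "\<forall>\<^sub>F t in at_top. 0 \<le> rc_energy (\<beta> * \<alpha> * \<rho>) (x t)"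
    using k by (simp add: rc_energy_nonneg)
  moreover have "\<forall>\<^sub>F t in at_top. rc_energy (\<beta> * \<alpha> * \<rho>) (x t) \<le> C * exp (- \<delta> * t)"
    using eventually_ge_at_top[of 0] by eventually_elim (rule decay)
  moreover have "((\<lambda>t. C * exp (- \<delta> * t)) \<longlongrightarrow> 0) at_top"
    using \<open>\<delta> > 0\<close> by real_asymp
  ultimately have "((\<lambda>t. rc_energy (\<beta> * \<alpha> * \<rho>) (x t)) \<longlongrightarrow> 0) at_top"
    by (rule tendsto_sandwich[OF _ _ tendsto_const])
  then show ?thesis by (rule tendsto_zero_if_rc_energy_tendsto_zero[OF k])
qed

theorem theorem6p1:
  fixes \<beta> \<alpha> \<rho> :: real
  assumes "\<beta> > 0" and "0 < \<alpha>" and "\<alpha> < 1" and "\<rho> > 0"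
  shows "(\<forall>z0. \<exists>x. rc_solution \<beta> \<alpha> \<rho> x \<and> x 0 = z0)
       \<and> (\<forall>\<epsilon>>0. \<exists>\<delta>>0. \<forall>x. rc_solution \<beta> \<alpha> \<rho> x \<and> norm (x 0) < \<delta>
              \<longrightarrow> (\<forall>t\<ge>0. norm (x t) < \<epsilon>))
       \<and> (\<forall>x. rc_solution \<beta> \<alpha> \<rho> x \<longrightarrow> (x \<longlongrightarrow> (0, 0)) at_top)"
  using rc_solution_exists[OF assms(1,2,4)] rc_solution_stable[OF assms(1,2,4)]
    rc_solution_tendsto_zero[OF assms(1,2,4)]
  unfolding zero_prod_def[symmetric] by blast

end
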